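(* Let the data be generated by the linear-Gaussian model in the context, with $c_1\neq0$, $c_2\neq0$ and $\sigma_t>0$. Then, writing $\mathrm{Var},\mathrm{Cov}$ for (co)variances under the observed joint distribution of $(x_1,x_2,t,y)$, one has $\mathrm{Var}(t)\mathrm{Cov}(x_1,x_2)-\mathrm{Cov}(x_1,t)\mathrm{Cov}(x_2,t)\neq 0$, $$c_{yt}=\frac{\mathrm{Cov}(t,y)\,\mathrm{Cov}(x_1,x_2)-\mathrm{Cov}(x_2,y)\,\mathrm{Cov}(x_1,t)}{\mathrm{Var}(t)\,\mathrm{Cov}(x_1,x_2)-\mathrm{Cov}(x_1,t)\,\mathrm{Cov}(x_2,t)},$$ and for every $t\in\mathbb R$ the interventional distribution is $p(y\mid do(t))=\mathcal N\big(c_{yt}\,t,\ \sigma_y^2+c_{yz}^2\big)$, where $\sigma_y^2+c_{yz}^2=\mathrm{Var}(y)-2c_{yt}\mathrm{Cov}(t,y)+c_{yt}^2\mathrm{Var}(t)$. In particular $p(y\mid do(t))$ is determined by the covariance matrix of the observed variables.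
   Context: Linear-Gaussian data generating model: $z\sim\mathcal N(0,1)$ is an unobserved confounder; given $z$, the observed variables are independent draws $x_1\mid z\sim\mathcal N(c_1 z,\sigma_1^2)$, $x_2\mid z\sim\mathcal N(c_2 z,\sigma_2^2)$, $t\mid z\sim\mathcal N(c_t z,\sigma_t^2)$, and $y\mid z,t\sim\mathcal N(c_{yz}z+c_{yt}t,\sigma_y^2)$, where $c_\cdot\in\mathbb R$ and $\sigma_\cdot>0$ are fixed parameters. Only $(x_1,x_2,t,y)$ is observed. The interventional distribution is defined by $p(y\mid do(t))=\int p(y\mid z,t)\,p(z)\,dz$. *)

theory Defs
  imports "HOL-Probability.Probability"
begin

text \<open>Joint density of the full (latent + observed) vector (z, x1, x2, t, y) of the
linear-Gaussian model: z ~ N(0,1); given z, x1, x2, t are independent with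
x1 ~ N(c1 z, s1^2), x2 ~ N(c2 z, s2^2), t ~ N(ct z, st^2); y given (z,t) ~ N(cyz z + cyt t, sy^2).
normal_density mu sigma is the N(mu, sigma^2) density.\<close>

definition lg_joint_density ::
  "real \<Rightarrow> real \<Rightarrow> real \<Rightarrow> real \<Rightarrow> real \<Rightarrow> real \<Rightarrow> real \<Rightarrow> real \<Rightarrow> real \<Rightarrow>
   real \<times> real \<times> real \<times> real \<times> real \<Rightarrow> real" where
  "lg_joint_density c1 s1 c2 s2 ct st cyz cyt sy =
     (\<lambda>(z, x1, x2, t, y).
        normal_density 0 1 z * normal_density (c1 * z) s1 x1 * normal_density (c2 * z) s2 x2
        * normal_density (ct * z) st t * normal_density (cyz * z + cyt * t) sy y)"

definition lg_model ::
  "real \<Rightarrow> real \<Rightarrow> real \<Rightarrow> real \<Rightarrow> real \<Rightarrow> real \<Rightarrow> real \<Rightarrow> real \<Rightarrow> real \<Rightarrow>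
   (real \<times> real \<times> real \<times> real \<times> real) measure" where
  "lg_model c1 s1 c2 s2 ct st cyz cyt sy =
     density lborel (\<lambda>w. ennreal (lg_joint_density c1 s1 c2 s2 ct st cyz cyt sy w))"

definition lg_observed ::
  "real \<Rightarrow> real \<Rightarrow> real \<Rightarrow> real \<Rightarrow> real \<Rightarrow> real \<Rightarrow> real \<Rightarrow> real \<Rightarrow> real \<Rightarrow>
   (real \<times> real \<times> real \<times> real) measure" where
  "lg_observed c1 s1 c2 s2 ct st cyz cyt sy =
     distr (lg_model c1 s1 c2 s2 ct st cyz cyt sy) borel (\<lambda>(z, x1, x2, t, y). (x1, x2, t, y))"

definition obs_x1 :: "real \<times> real \<times> real \<times> real \<Rightarrow> real" where "obs_x1 = (\<lambda>(x1, x2, t, y). x1)"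
definition obs_x2 :: "real \<times> real \<times> real \<times> real \<Rightarrow> real" where "obs_x2 = (\<lambda>(x1, x2, t, y). x2)"
definition obs_t  :: "real \<times> real \<times> real \<times> real \<Rightarrow> real" where "obs_t  = (\<lambda>(x1, x2, t, y). t)"
definition obs_y  :: "real \<times> real \<times> real \<times> real \<Rightarrow> real" where "obs_y  = (\<lambda>(x1, x2, t, y). y)"

definition Cov :: "'a measure \<Rightarrow> ('a \<Rightarrow> real) \<Rightarrow> ('a \<Rightarrow> real) \<Rightarrow> real" where
  "Cov M X Y = (\<integral>w. (X w - (\<integral>v. X v \<partial>M)) * (Y w - (\<integral>v. Y v \<partial>M)) \<partial>M)"

definition Var :: "'a measure \<Rightarrow> ('a \<Rightarrow> real) \<Rightarrow> real" where
  "Var M X = Cov M X X"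

definition do_density :: "real \<Rightarrow> real \<Rightarrow> real \<Rightarrow> real \<Rightarrow> real \<Rightarrow> real" where
  "do_density cyz cyt sy t y =
     (\<integral>z. normal_density (cyz * z + cyt * t) sy y * normal_density 0 1 z \<partial>lborel)"

end

theory Submission
  imports Defs
begin

text \<open>Conditionally on z the observed vector is a Gaussian chain (x1, x2, t independent, y affine
  in t), so integrating out y, t, x2, x1 and z in turn with the Gaussian second-moment formula
  gives the second moment of every affine functional of (x1, x2, t, y); the integrands
  (affine)^2 + K stay nonnegative, so Tonelli applies throughout. Polarization then yields all
  covariances: Cov(x1, x2) = c1 c2, Cov(xi, t) = ci ct, Var t = ct^2 + st^2,
  Cov(x2, y) = c2 (cyz + cyt ct) and Cov(t, y) = ct (cyz + cyt ct) + cyt st^2. The confounded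
  terms cancel in the two determinants, which become c1 c2 st^2 and cyt c1 c2 st^2. The
  interventional density is a Gaussian convolution after the substitution u = cyz z.\<close>

lemma nn_integral_normal_density_affine_sq:
  assumes \<sigma>: "\<sigma> > 0" and K: "K \<ge> 0"
  shows "(\<integral>\<^sup>+u. ennreal (normal_density m \<sigma> u * ((p + q * u)\<^sup>2 + K)) \<partial>lborel)
    = ennreal ((p + q * m)\<^sup>2 + q\<^sup>2 * \<sigma>\<^sup>2 + K)"
proof -
  have mass: "has_bochner_integral lborel (normal_density m \<sigma>) 1"
    using normal_moment_even[OF \<sigma>, of m 0] by simp
  have first: "has_bochner_integral lborel (\<lambda>u. normal_density m \<sigma> u * (u - m)) 0"
    using normal_moment_odd[OF \<sigma>, of m 0] by simp
  have second: "has_bochner_integral lborel (\<lambda>u. normal_density m \<sigma> u * (u - m)\<^sup>2) (\<sigma>\<^sup>2)"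
    using normal_moment_even[OF \<sigma>, of m 1] \<sigma> by (simp add: fact_numeral)
  have "has_bochner_integral lborel
     (\<lambda>u. ((p + q * m)\<^sup>2 + K) * normal_density m \<sigma> u
        + (2 * (p + q * m) * q) * (normal_density m \<sigma> u * (u - m))
        + q\<^sup>2 * (normal_density m \<sigma> u * (u - m)\<^sup>2))
     (((p + q * m)\<^sup>2 + K) * 1 + (2 * (p + q * m) * q) * 0 + q\<^sup>2 * \<sigma>\<^sup>2)"
    by (intro has_bochner_integral_add has_bochner_integral_mult_right mass first second)
  then have "has_bochner_integral lborel (\<lambda>u. normal_density m \<sigma> u * ((p + q * u)\<^sup>2 + K))
    ((p + q * m)\<^sup>2 + q\<^sup>2 * \<sigma>\<^sup>2 + K)"
    by (rule has_bochner_integral_cong[THEN iffD1, rotated 3]) (auto simp: power2_eq_square algebra_simps)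
  then show ?thesis
    using K by (subst nn_integral_eq_integrable) (auto simp: has_bochner_integral_iff)
qed

lemma nn_integral_normal_density_fst_affine_sq:
  fixes G :: "real \<Rightarrow> 'b::euclidean_space \<Rightarrow> real"
  assumes \<sigma>: "\<sigma> > 0" and K: "K \<ge> 0"
    and G_measurable: "(\<lambda>w. G (fst w) (snd w)) \<in> borel_measurable borel"
    and G_nonneg: "\<And>u v. 0 \<le> G u v"
    and G_inner: "\<And>u. (\<integral>\<^sup>+v. ennreal (G u v) \<partial>lborel) = ennreal ((p + q * u)\<^sup>2 + K)"
  shows "(\<integral>\<^sup>+w. ennreal (normal_density m \<sigma> (fst w) * G (fst w) (snd w)) \<partial>lborel)
    = ennreal ((p + q * m)\<^sup>2 + q\<^sup>2 * \<sigma>\<^sup>2 + K)"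
proof -
  have G_prod[measurable]: "(\<lambda>w. G (fst w) (snd w)) \<in> borel_measurable (lborel \<Otimes>\<^sub>M (lborel :: 'b measure))"
    using G_measurable by (simp add: lborel_prod)
  have [measurable]: "G u \<in> borel_measurable lborel" for u
    using measurable_Pair2[OF G_prod, of u] by simp
  have "(\<integral>\<^sup>+w. ennreal (normal_density m \<sigma> (fst w) * G (fst w) (snd w)) \<partial>lborel)
      = (\<integral>\<^sup>+u. \<integral>\<^sup>+v. ennreal (normal_density m \<sigma> u) * ennreal (G u v) \<partial>lborel \<partial>lborel)"
    by (simp add: lborel_prod[symmetric] lborel.nn_integral_fst[symmetric] ennreal_mult G_nonneg)
  also have "\<dots> = (\<integral>\<^sup>+u. ennreal (normal_density m \<sigma> u * ((p + q * u)\<^sup>2 + K)) \<partial>lborel)"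
    by (simp add: nn_integral_cmult G_inner ennreal_mult K)
  also have "\<dots> = ennreal ((p + q * m)\<^sup>2 + q\<^sup>2 * \<sigma>\<^sup>2 + K)"
    using \<sigma> K by (rule nn_integral_normal_density_affine_sq)
  finally show ?thesis .
qed

lemma continuous_on_normal_density [continuous_intros]:
  "continuous_on S f \<Longrightarrow> continuous_on S g \<Longrightarrow> continuous_on S (\<lambda>x. normal_density (f x) \<sigma> (g x))"
  by (cases "\<sigma> = 0") (simp_all add: normal_density_def continuous_intros)

definition obs_lin :: "real \<Rightarrow> real \<Rightarrow> real \<Rightarrow> real \<Rightarrow> real \<Rightarrow> real \<times> real \<times> real \<times> real \<Rightarrow> real" where
  "obs_lin a0 b c d e = (\<lambda>(x1, x2, t, y). a0 + b * x1 + c * x2 + d * t + e * y)"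

lemma obs_lin_add:
  "obs_lin a0 b c d e v + obs_lin a0' b' c' d' e' v = obs_lin (a0 + a0') (b + b') (c + c') (d + d') (e + e') v"
  by (simp add: obs_lin_def split_beta algebra_simps)

lemma obs_lin_diff:
  "obs_lin a0 b c d e v - obs_lin a0' b' c' d' e' v = obs_lin (a0 - a0') (b - b') (c - c') (d - d') (e - e') v"
  by (simp add: obs_lin_def split_beta algebra_simps)

lemma borel_measurable_obs_lin [measurable]: "obs_lin a0 b c d e \<in> borel_measurable borel"
  unfolding obs_lin_def split_beta by (intro borel_measurable_continuous_onI continuous_intros)

lemma obs_coordinates_eq_obs_lin:
  "obs_x1 = obs_lin 0 1 0 0 0" "obs_x2 = obs_lin 0 0 1 0 0" "obs_t = obs_lin 0 0 0 1 0" "obs_y = obs_lin 0 0 0 0 1"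
  by (auto simp: obs_x1_def obs_x2_def obs_t_def obs_y_def obs_lin_def)

locale linear_gaussian_model =
  fixes c1 s1 c2 s2 ct st cyz cyt sy :: real
  assumes s1_pos: "s1 > 0" and s2_pos: "s2 > 0" and st_pos: "st > 0" and sy_pos: "sy > 0"
begin

abbreviation observed :: "(real \<times> real \<times> real \<times> real) measure" where
  "observed \<equiv> lg_observed c1 s1 c2 s2 ct st cyz cyt sy"

definition ty_density :: "real \<Rightarrow> real \<times> real \<Rightarrow> real" where
  "ty_density z = (\<lambda>(t, y). normal_density (ct * z) st t * normal_density (cyz * z + cyt * t) sy y)"

definition x2ty_density :: "real \<Rightarrow> real \<times> real \<times> real \<Rightarrow> real" where
  "x2ty_density z = (\<lambda>(x2, ty). normal_density (c2 * z) s2 x2 * ty_density z ty)"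

definition obs_cond_density :: "real \<Rightarrow> real \<times> real \<times> real \<times> real \<Rightarrow> real" where
  "obs_cond_density z = (\<lambda>(x1, v). normal_density (c1 * z) s1 x1 * x2ty_density z v)"

lemma lg_joint_density_eq:
  "lg_joint_density c1 s1 c2 s2 ct st cyz cyt sy w = normal_density 0 1 (fst w) * obs_cond_density (fst w) (snd w)"
  by (simp add: lg_joint_density_def obs_cond_density_def x2ty_density_def ty_density_def split_beta mult_ac)

lemma nn_integral_ty_density_affine_sq:
  assumes K: "K \<ge> 0"
  shows "(\<integral>\<^sup>+w. ennreal (ty_density z w * ((A + d * fst w + e * snd w)\<^sup>2 + K)) \<partial>lborel)
    = ennreal ((A + e * (cyz * z) + (d + e * cyt) * (ct * z))\<^sup>2 + (d + e * cyt)\<^sup>2 * st\<^sup>2 + (e\<^sup>2 * sy\<^sup>2 + K))"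
  unfolding ty_density_def split_beta mult.assoc
proof (rule nn_integral_normal_density_fst_affine_sq[OF st_pos])
  show "(\<integral>\<^sup>+y. ennreal (normal_density (cyz * z + cyt * t) sy y * ((A + d * t + e * y)\<^sup>2 + K)) \<partial>lborel)
      = ennreal ((A + e * (cyz * z) + (d + e * cyt) * t)\<^sup>2 + (e\<^sup>2 * sy\<^sup>2 + K))" for t
    using nn_integral_normal_density_affine_sq[OF sy_pos K, of "cyz * z + cyt * t" "A + d * t" e]
    by (simp add: algebra_simps power2_eq_square)
qed (use K in \<open>auto intro!: borel_measurable_continuous_onI continuous_intros\<close>)

lemma nn_integral_x2ty_density_affine_sq:
  assumes K: "K \<ge> 0"
  shows "(\<integral>\<^sup>+w. ennreal (x2ty_density z w * ((A + c * fst w + d * fst (snd w) + e * snd (snd w))\<^sup>2 + K)) \<partial>lborel)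
    = ennreal ((A + e * (cyz * z) + (d + e * cyt) * (ct * z) + c * (c2 * z))\<^sup>2 + c\<^sup>2 * s2\<^sup>2
        + ((d + e * cyt)\<^sup>2 * st\<^sup>2 + (e\<^sup>2 * sy\<^sup>2 + K)))"
  unfolding x2ty_density_def split_beta mult.assoc
proof (rule nn_integral_normal_density_fst_affine_sq[OF s2_pos])
  show "(\<integral>\<^sup>+v. ennreal (ty_density z v * ((A + c * x2 + d * fst v + e * snd v)\<^sup>2 + K)) \<partial>lborel)
      = ennreal ((A + e * (cyz * z) + (d + e * cyt) * (ct * z) + c * x2)\<^sup>2 + ((d + e * cyt)\<^sup>2 * st\<^sup>2 + (e\<^sup>2 * sy\<^sup>2 + K)))" for x2
    using nn_integral_ty_density_affine_sq[OF K, of z "A + c * x2" d e]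
    by (simp add: algebra_simps)
qed (use K in \<open>auto simp: ty_density_def split_beta intro!: borel_measurable_continuous_onI continuous_intros\<close>)

text \<open>In terms of the independent noises, b x1 + c x2 + d t + e y equals
  z_loading b c d e * z + b \<epsilon>1 + c \<epsilon>2 + (d + e cyt) \<epsilon>t + e \<epsilon>y,
  so obs_cov is the covariance form of such functionals.\<close>

definition z_loading :: "real \<Rightarrow> real \<Rightarrow> real \<Rightarrow> real \<Rightarrow> real" where
  "z_loading b c d e = b * c1 + c * c2 + (d + e * cyt) * ct + e * cyz"

definition obs_cov :: "real \<Rightarrow> real \<Rightarrow> real \<Rightarrow> real \<Rightarrow> real \<Rightarrow> real \<Rightarrow> real \<Rightarrow> real \<Rightarrow> real" where
  "obs_cov b c d e b' c' d' e' = z_loading b c d e * z_loading b' c' d' e'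
     + b * b' * s1\<^sup>2 + c * c' * s2\<^sup>2 + (d + e * cyt) * (d' + e' * cyt) * st\<^sup>2 + e * e' * sy\<^sup>2"

lemma nn_integral_obs_cond_density_affine_sq:
  assumes K: "K \<ge> 0"
  shows "(\<integral>\<^sup>+v. ennreal (obs_cond_density z v * ((A + obs_lin 0 b c d e v)\<^sup>2 + K)) \<partial>lborel)
    = ennreal ((A + z_loading b c d e * z)\<^sup>2
        + (b\<^sup>2 * s1\<^sup>2 + c\<^sup>2 * s2\<^sup>2 + (d + e * cyt)\<^sup>2 * st\<^sup>2 + e\<^sup>2 * sy\<^sup>2 + K))"
proof -
  have "(\<integral>\<^sup>+v. ennreal (obs_cond_density z v * ((A + obs_lin 0 b c d e v)\<^sup>2 + K)) \<partial>lborel)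
    = ennreal ((A + e * (cyz * z) + (d + e * cyt) * (ct * z) + c * (c2 * z) + b * (c1 * z))\<^sup>2 + b\<^sup>2 * s1\<^sup>2
        + (c\<^sup>2 * s2\<^sup>2 + ((d + e * cyt)\<^sup>2 * st\<^sup>2 + (e\<^sup>2 * sy\<^sup>2 + K))))"
    unfolding obs_cond_density_def obs_lin_def split_beta mult.assoc
  proof (rule nn_integral_normal_density_fst_affine_sq[OF s1_pos])
    show "(\<integral>\<^sup>+v. ennreal (x2ty_density z v * ((A + (0 + b * x1 + c * fst v + d * fst (snd v) + e * snd (snd v)))\<^sup>2 + K)) \<partial>lborel)
        = ennreal ((A + e * (cyz * z) + (d + e * cyt) * (ct * z) + c * (c2 * z) + b * x1)\<^sup>2
            + (c\<^sup>2 * s2\<^sup>2 + ((d + e * cyt)\<^sup>2 * st\<^sup>2 + (e\<^sup>2 * sy\<^sup>2 + K))))" for x1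
      using nn_integral_x2ty_density_affine_sq[OF K, of z "A + b * x1" c d e]
      by (simp add: algebra_simps)
  qed (use K in \<open>auto simp: x2ty_density_def ty_density_def split_beta
      intro!: borel_measurable_continuous_onI continuous_intros\<close>)
  then show ?thesis
    by (simp add: z_loading_def algebra_simps)
qed

lemma borel_measurable_lg_joint_density [measurable]:
  "lg_joint_density c1 s1 c2 s2 ct st cyz cyt sy \<in> borel_measurable borel"
  unfolding lg_joint_density_def split_beta by (intro borel_measurable_continuous_onI continuous_intros)

lemma nn_integral_observed:
  assumes [measurable]: "f \<in> borel_measurable borel"
  shows "(\<integral>\<^sup>+v. f v \<partial>observed)
    = (\<integral>\<^sup>+w. ennreal (lg_joint_density c1 s1 c2 s2 ct st cyz cyt sy w) * f (snd w) \<partial>lborel)"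
proof -
  have "(\<lambda>(z, x1, x2, t, y). (x1, x2, t, y)) = (snd :: real \<times> real \<times> real \<times> real \<times> real \<Rightarrow> _)"
    by auto
  moreover have "snd \<in> lg_model c1 s1 c2 s2 ct st cyz cyt sy \<rightarrow>\<^sub>M borel"
    unfolding lg_model_def measurable_cong_sets[OF sets_density refl] measurable_lborel2
    by (intro borel_measurable_continuous_onI continuous_intros)
  ultimately show ?thesis
    unfolding lg_observed_def by (simp add: nn_integral_distr lg_model_def nn_integral_density)
qed

lemma sets_observed [measurable_cong]: "sets observed = sets borel"
  by (simp add: lg_observed_def)

lemma has_bochner_integral_observed_obs_lin_sq:
  "has_bochner_integral observed (\<lambda>v. (obs_lin a0 b c d e v)\<^sup>2) (a0\<^sup>2 + obs_cov b c d e b c d e)"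
proof (rule has_bochner_integral_nn_integral)
  have "(\<integral>\<^sup>+v. ennreal ((obs_lin a0 b c d e v)\<^sup>2) \<partial>observed)
      = (\<integral>\<^sup>+w. ennreal (normal_density 0 1 (fst w) * (obs_cond_density (fst w) (snd w)
          * ((a0 + obs_lin 0 b c d e (snd w))\<^sup>2 + 0))) \<partial>lborel)"
    by (simp add: nn_integral_observed lg_joint_density_eq ennreal_mult'[symmetric] mult_ac)
       (simp add: obs_lin_def split_beta add.assoc)
  also have "\<dots> = ennreal ((a0 + z_loading b c d e * 0)\<^sup>2 + (z_loading b c d e)\<^sup>2 * 1\<^sup>2
      + (b\<^sup>2 * s1\<^sup>2 + c\<^sup>2 * s2\<^sup>2 + (d + e * cyt)\<^sup>2 * st\<^sup>2 + e\<^sup>2 * sy\<^sup>2 + 0))"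
  proof (rule nn_integral_normal_density_fst_affine_sq
      [where G = "\<lambda>z v. obs_cond_density z v * ((a0 + obs_lin 0 b c d e v)\<^sup>2 + 0)"])
    show "(\<integral>\<^sup>+v. ennreal (obs_cond_density z v * ((a0 + obs_lin 0 b c d e v)\<^sup>2 + 0)) \<partial>lborel)
      = ennreal ((a0 + z_loading b c d e * z)\<^sup>2
          + (b\<^sup>2 * s1\<^sup>2 + c\<^sup>2 * s2\<^sup>2 + (d + e * cyt)\<^sup>2 * st\<^sup>2 + e\<^sup>2 * sy\<^sup>2 + 0))" for z
      by (rule nn_integral_obs_cond_density_affine_sq) simp
  qed (auto simp: obs_cond_density_def x2ty_density_def ty_density_def obs_lin_def split_beta
      intro!: borel_measurable_continuous_onI continuous_intros)
  also have "\<dots> = ennreal (a0\<^sup>2 + obs_cov b c d e b c d e)"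
    by (simp add: obs_cov_def power2_eq_square algebra_simps)
  finally show "(\<integral>\<^sup>+v. ennreal ((obs_lin a0 b c d e v)\<^sup>2) \<partial>observed) = ennreal (a0\<^sup>2 + obs_cov b c d e b c d e)" .
qed (auto simp: obs_cov_def)

lemma has_bochner_integral_observed_obs_lin_mult:
  "has_bochner_integral observed (\<lambda>v. obs_lin a0 b c d e v * obs_lin a0' b' c' d' e' v)
     (a0 * a0' + obs_cov b c d e b' c' d' e')"
proof -
  let ?S = "obs_lin (a0 + a0') (b + b') (c + c') (d + d') (e + e')"
  let ?D = "obs_lin (a0 - a0') (b - b') (c - c') (d - d') (e - e')"
  have "has_bochner_integral observed (\<lambda>v. ((?S v)\<^sup>2 - (?D v)\<^sup>2) / 4)
    (((a0 + a0')\<^sup>2 + obs_cov (b + b') (c + c') (d + d') (e + e') (b + b') (c + c') (d + d') (e + e')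
      - ((a0 - a0')\<^sup>2 + obs_cov (b - b') (c - c') (d - d') (e - e') (b - b') (c - c') (d - d') (e - e'))) / 4)"
    by (intro has_bochner_integral_divide_zero has_bochner_integral_diff
        has_bochner_integral_observed_obs_lin_sq)
  moreover have "((?S v)\<^sup>2 - (?D v)\<^sup>2) / 4 = obs_lin a0 b c d e v * obs_lin a0' b' c' d' e' v" for v
    unfolding obs_lin_add[symmetric] obs_lin_diff[symmetric] by (simp add: power2_eq_square algebra_simps)
  moreover have "((a0 + a0')\<^sup>2 + obs_cov (b + b') (c + c') (d + d') (e + e') (b + b') (c + c') (d + d') (e + e')
      - ((a0 - a0')\<^sup>2 + obs_cov (b - b') (c - c') (d - d') (e - e') (b - b') (c - c') (d - d') (e - e'))) / 4
    = a0 * a0' + obs_cov b c d e b' c' d' e'"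
    by (simp add: obs_cov_def z_loading_def power2_eq_square algebra_simps)
  ultimately show ?thesis
    by simp
qed

lemma integral_observed_obs_lin_centered: "integral\<^sup>L observed (obs_lin 0 b c d e) = 0"
proof -
  have "obs_lin 1 0 0 0 0 v = 1" for v
    by (simp add: obs_lin_def split_beta)
  then show ?thesis
    using has_bochner_integral_integral_eq[OF has_bochner_integral_observed_obs_lin_mult[of 0 b c d e 1 0 0 0 0]]
    by (simp add: obs_cov_def z_loading_def)
qed

lemma Cov_observed_obs_lin:
  "Cov observed (obs_lin 0 b c d e) (obs_lin 0 b' c' d' e') = obs_cov b c d e b' c' d' e'"
  using has_bochner_integral_observed_obs_lin_mult[of 0 b c d e 0 b' c' d' e']
  by (simp add: Cov_def integral_observed_obs_lin_centered has_bochner_integral_integral_eq)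

lemma observed_covariances:
  "Var observed obs_t = ct\<^sup>2 + st\<^sup>2"
  "Cov observed obs_x1 obs_x2 = c1 * c2"
  "Cov observed obs_x1 obs_t = c1 * ct"
  "Cov observed obs_x2 obs_t = c2 * ct"
  "Cov observed obs_t obs_y = ct * (cyz + cyt * ct) + cyt * st\<^sup>2"
  "Cov observed obs_x2 obs_y = c2 * (cyz + cyt * ct)"
  "Var observed obs_y = (cyz + cyt * ct)\<^sup>2 + cyt\<^sup>2 * st\<^sup>2 + sy\<^sup>2"
  by (simp_all add: Var_def obs_coordinates_eq_obs_lin Cov_observed_obs_lin obs_cov_def z_loading_def
      power2_eq_square algebra_simps)

end

lemma normal_density_shift: "normal_density \<mu> \<sigma> x = normal_density 0 \<sigma> (x - \<mu>)"
  by (simp add: normal_density_def)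

lemma std_normal_density_scale:
  "c \<noteq> 0 \<Longrightarrow> normal_density 0 1 z = \<bar>c\<bar> * normal_density 0 \<bar>c\<bar> (c * z)"
  unfolding normal_density_def by (simp add: real_sqrt_mult power_mult_distrib field_simps)

lemma do_density_normal:
  assumes sy: "sy > 0"
  shows "do_density cyz cyt sy t y = normal_density (cyt * t) (sqrt (sy\<^sup>2 + cyz\<^sup>2)) y"
proof (cases "cyz = 0")
  case True
  then show ?thesis unfolding do_density_def using sy by simp
next
  case False
  define f where "f u = ennreal (normal_density (cyt * t + u) sy y * normal_density 0 \<bar>cyz\<bar> u)" for u
  have [measurable]: "f \<in> borel_measurable borel"
    unfolding f_def normal_density_def by measurable
  have "(\<integral>\<^sup>+z. ennreal (normal_density (cyz * z + cyt * t) sy y * normal_density 0 1 z) \<partial>lborel)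
      = (\<integral>\<^sup>+z. ennreal \<bar>cyz\<bar> * f (0 + cyz * z) \<partial>lborel)"
    by (intro nn_integral_cong)
      (simp add: f_def std_normal_density_scale[OF False] ennreal_mult'[symmetric] algebra_simps)
  also have "\<dots> = (\<integral>\<^sup>+u. f u \<partial>lborel)"
    using nn_integral_real_affine[of f cyz 0] False by (simp add: nn_integral_cmult)
  also have "\<dots> = (\<integral>\<^sup>+u. ennreal (normal_density 0 sy (y - cyt * t - u) * normal_density 0 \<bar>cyz\<bar> u) \<partial>lborel)"
    by (simp add: f_def normal_density_shift[of "cyt * t + _"] diff_diff_eq)
  also have "\<dots> = ennreal (normal_density (cyt * t) (sqrt (sy\<^sup>2 + cyz\<^sup>2)) y)"
    using conv_normal_density_zero_mean[OF sy, of "\<bar>cyz\<bar>"] False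
    by (simp add: fun_eq_iff normal_density_shift[of "cyt * t"])
  finally show ?thesis
    unfolding do_density_def
    by (subst (asm) nn_integral_eq_integrable) (auto simp: normal_density_def)
qed

theorem mainTheorem4:
  fixes c1 c2 ct cyz cyt s1 s2 st sy :: real
  defines "P \<equiv> lg_observed c1 s1 c2 s2 ct st cyz cyt sy"
  assumes "c1 \<noteq> 0" and "c2 \<noteq> 0"
    and "s1 > 0" and "s2 > 0" and "st > 0" and "sy > 0"
  shows "Var P obs_t * Cov P obs_x1 obs_x2 - Cov P obs_x1 obs_t * Cov P obs_x2 obs_t \<noteq> 0
    \<and> cyt = (Cov P obs_t obs_y * Cov P obs_x1 obs_x2 - Cov P obs_x2 obs_y * Cov P obs_x1 obs_t)
               / (Var P obs_t * Cov P obs_x1 obs_x2 - Cov P obs_x1 obs_t * Cov P obs_x2 obs_t)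
    \<and> (\<forall>t y. do_density cyz cyt sy t y = normal_density (cyt * t) (sqrt (sy\<^sup>2 + cyz\<^sup>2)) y)
    \<and> sy\<^sup>2 + cyz\<^sup>2 = Var P obs_y - 2 * cyt * Cov P obs_t obs_y + cyt\<^sup>2 * Var P obs_t"
proof -
  interpret linear_gaussian_model c1 s1 c2 s2 ct st cyz cyt sy
    using assms(4-7) by unfold_locales
  have det: "Var P obs_t * Cov P obs_x1 obs_x2 - Cov P obs_x1 obs_t * Cov P obs_x2 obs_t = c1 * c2 * st\<^sup>2"
    unfolding P_def observed_covariances by (simp add: power2_eq_square algebra_simps)
  have det_nonzero: "c1 * c2 * st\<^sup>2 \<noteq> 0"
    using assms(2,3,6) by simp
  have "Cov P obs_t obs_y * Cov P obs_x1 obs_x2 - Cov P obs_x2 obs_y * Cov P obs_x1 obs_t = cyt * (c1 * c2 * st\<^sup>2)"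
    unfolding P_def observed_covariances by (simp add: power2_eq_square algebra_simps)
  moreover have "sy\<^sup>2 + cyz\<^sup>2 = Var P obs_y - 2 * cyt * Cov P obs_t obs_y + cyt\<^sup>2 * Var P obs_t"
    unfolding P_def observed_covariances by (simp add: power2_eq_square algebra_simps)
  ultimately show ?thesis
    using det det_nonzero do_density_normal[OF assms(7)] by simp
qed

end
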